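(* For every $i \in \mathbb{N}$, the transposition $\sigma_{(i)}$ lies in the bi-immune symmetric group $G_{\mathfrak{B}}$.
   Context: $\mathbb{N}$ denotes the non-negative integers, and $\mathrm{Sym}(\mathbb{N})$ the group of all permutations of $\mathbb{N}$ under composition ($g \circ f$ means apply $f$ first). For $i \in \mathbb{N}$, $\sigma_{(i)}$ is the permutation swapping $i$ and $i+1$ and fixing all other numbers. For $A \subseteq \mathbb{N}$ with increasing enumeration $a_0 < a_1 < \cdots$, define $\sigma_A(x) = \lim_{n \to \infty} (\sigma_{(a_0)} \circ \sigma_{(a_1)} \circ \cdots \circ \sigma_{(a_n)})(x)$ (eventually constant for each $x$). A set $A$ is immune if it is infinite and contains no infinite computably enumerable subset; $A$ is bi-immune if both $A$ and $\mathbb{N} - A$ are immune. For bi-immune $A$, $\sigma_A$ is a permutation of $\mathbb{N}$. The bi-immune symmetric group $G_{\mathfrak{B}}$ is the subgroup of $\mathrm{Sym}(\mathbb{N})$ generated by $\{\sigma_A : A \text{ bi-immune}\}$. *)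

theory Defs
  imports Main "HOL-Library.Infinite_Set" "HOL-Algebra.Bij" "HOL-Algebra.Generated_Groups"
begin

datatype recf = Zf | Sf | Idf nat | Cnf recf "recf list" | Prf recf recf | Mnf recf

text \<open>Big-step semantics: eval f xs y means f applied to the argument list xs
  converges with value y.\<close>
inductive eval :: "recf \<Rightarrow> nat list \<Rightarrow> nat \<Rightarrow> bool" where
  ev_Z: "eval Zf xs 0"
| ev_S: "eval Sf (x # xs) (Suc x)"
| ev_Id: "k < length xs \<Longrightarrow> eval (Idf k) xs (xs ! k)"
| ev_Cn: "length ys = length gs \<Longrightarrow> (\<forall>i < length gs. eval (gs ! i) xs (ys ! i))
           \<Longrightarrow> eval f ys z \<Longrightarrow> eval (Cnf f gs) xs z"
| ev_Pr0: "eval f xs z \<Longrightarrow> eval (Prf f g) (0 # xs) z"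
| ev_PrS: "eval (Prf f g) (n # xs) y \<Longrightarrow> eval g (n # y # xs) z
           \<Longrightarrow> eval (Prf f g) (Suc n # xs) z"
| ev_Mn: "eval f (n # xs) 0 \<Longrightarrow> (\<forall>m < n. \<exists>y. eval f (m # xs) (Suc y))
           \<Longrightarrow> eval (Mnf f) xs n"

definition ce :: "nat set \<Rightarrow> bool" where
  "ce A \<longleftrightarrow> (\<exists>f. A = {x. \<exists>y. eval f [x] y})"

definition immune :: "nat set \<Rightarrow> bool" where
  "immune A \<longleftrightarrow> infinite A \<and> \<not> (\<exists>B. B \<subseteq> A \<and> infinite B \<and> ce B)"

definition bi_immune :: "nat set \<Rightarrow> bool" where
  "bi_immune A \<longleftrightarrow> immune A \<and> immune (UNIV - A)"

definition adj_swap :: "nat \<Rightarrow> nat \<Rightarrow> nat" where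
  "adj_swap i = (\<lambda>x. if x = i then Suc i else if x = Suc i then i else x)"

fun prefix_comp :: "nat set \<Rightarrow> nat \<Rightarrow> nat \<Rightarrow> nat" where
  "prefix_comp A 0 = adj_swap (enumerate A 0)"
| "prefix_comp A (Suc n) = prefix_comp A n \<circ> adj_swap (enumerate A (Suc n))"

definition sigma_set :: "nat set \<Rightarrow> nat \<Rightarrow> nat" where
  "sigma_set A = (\<lambda>x. THE y. \<exists>N. \<forall>n \<ge> N. prefix_comp A n x = y)"

definition G_B :: "(nat \<Rightarrow> nat) set" where
  "G_B = generate (BijGroup (UNIV :: nat set)) {sigma_set A | A. bi_immune A}"

end

theory Submission
  imports Defs "HOL-Library.Countable"
begin

(*
  If no two elements of A are adjacent, sigma_A is the product of the commuting transpositions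
  sigma_(a), a \<in> A; if moreover every element of A exceeds i + 1, then
  sigma_(A \<union> {i}) = sigma_(i) \<circ> sigma_A, and since sigma_A is an involution,
  sigma_(i) = sigma_(A \<union> {i}) \<circ> sigma_A. Such an A with A and A \<union> {i} both bi-immune
  comes from a diagonalisation: list the infinite c.e. sets as W_0, W_1, ... and choose
  c_0 < c_1 < ... above i + 1 with c_2n, c_2n+1 \<in> W_n. Then A = {c_2n} meets every W_n, and
  the odd-indexed c_2n+1 lie in every W_n outside A \<union> {i}.
*)

definition sparse :: "nat set \<Rightarrow> bool" where
  "sparse A \<longleftrightarrow> (\<forall>a\<in>A. Suc a \<notin> A)"

text \<open>For sparse A, the product of the transpositions sigma_(a), a \<in> A.\<close>
definition swap_pairs :: "nat set \<Rightarrow> nat \<Rightarrow> nat" where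
  "swap_pairs A x = (if x \<in> A then Suc x else if x \<in> Suc ` A then x - 1 else x)"

lemma swap_pairs_empty [simp]: "swap_pairs {} = id"
  by (auto simp: swap_pairs_def)

lemma swap_pairs_insert:
  assumes "e \<notin> A" "Suc e \<notin> A" "e \<notin> Suc ` A"
  shows "swap_pairs (insert e A) = swap_pairs A \<circ> adj_swap e"
    and "swap_pairs (insert e A) = adj_swap e \<circ> swap_pairs A"
  using assms unfolding fun_eq_iff swap_pairs_def adj_swap_def
  by (auto simp: Suc_pred')

lemma swap_pairs_involution:
  assumes "sparse A"
  shows "swap_pairs A (swap_pairs A x) = x"
proof (cases "x \<in> A")
  case True
  then show ?thesis using assms by (simp add: sparse_def swap_pairs_def)
next
  case False
  then show ?thesis by (auto simp: swap_pairs_def)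
qed

lemma swap_pairs_bij:
  assumes "sparse A"
  shows "bij (swap_pairs A)"
  using swap_pairs_involution[OF assms] by (metis bij_betw_byWitness UNIV_I subsetI)

lemma swap_pairs_cong:
  assumes "A \<inter> {..x} = B \<inter> {..x}"
  shows "swap_pairs A x = swap_pairs B x"
proof -
  have at_x: "x \<in> A \<longleftrightarrow> x \<in> B" using assms by blast
  have below_x: "x \<in> Suc ` C \<longleftrightarrow> x \<in> Suc ` (C \<inter> {..x})" for C by auto
  have "x \<in> Suc ` A \<longleftrightarrow> x \<in> Suc ` B"
    by (simp only: below_x[of A] below_x[of B] assms)
  with at_x show ?thesis by (simp add: swap_pairs_def)
qed

lemma prefix_comp_eq_swap_pairs:
  assumes "infinite A" "sparse A"
  shows "prefix_comp A n = swap_pairs (enumerate A ` {..n})"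
proof (induction n)
  case 0
  show ?case using swap_pairs_insert(1)[of "enumerate A 0" "{}"] by simp
next
  case (Suc n)
  let ?e = "enumerate A (Suc n)" and ?F = "enumerate A ` {..n}"
  have below: "f < ?e" if "f \<in> ?F" for f
    using that assms(1) by auto
  have "?e \<notin> Suc ` ?F"
  proof
    assume "?e \<in> Suc ` ?F"
    then obtain k where "?e = Suc (enumerate A k)" by blast
    with assms show False by (metis enumerate_in_set sparse_def)
  qed
  moreover have "?e \<notin> ?F" "Suc ?e \<notin> ?F"
    using below by (auto dest: less_SucI)
  ultimately have "swap_pairs (insert ?e ?F) = swap_pairs ?F \<circ> adj_swap ?e"
    by (intro swap_pairs_insert(1))
  then show ?case by (simp add: Suc.IH atMost_Suc)
qed

lemma prefix_comp_eventually:
  assumes "infinite A" "sparse A" "x \<le> n"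
  shows "prefix_comp A n x = swap_pairs A x"
proof -
  have "A \<inter> {..x} \<subseteq> enumerate A ` {..n}"
  proof
    fix a assume a: "a \<in> A \<inter> {..x}"
    then obtain k where k: "a = enumerate A k"
      using enumerate_Ex[OF assms(1)] by blast
    have "k \<le> n"
      using le_enumerate[OF assms(1), of k] k a assms(3) by simp
    with k show "a \<in> enumerate A ` {..n}" by simp
  qed
  moreover have "enumerate A ` {..n} \<subseteq> A"
    using enumerate_in_set[OF assms(1)] by blast
  ultimately have "enumerate A ` {..n} \<inter> {..x} = A \<inter> {..x}" by blast
  then have "swap_pairs (enumerate A ` {..n}) x = swap_pairs A x"
    by (rule swap_pairs_cong)
  then show ?thesis by (simp only: prefix_comp_eq_swap_pairs[OF assms(1,2)])
qed

lemma sigma_set_eq_swap_pairs: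
  assumes "infinite A" "sparse A"
  shows "sigma_set A = swap_pairs A"
proof
  fix x
  show "sigma_set A x = swap_pairs A x"
    unfolding sigma_set_def
  proof (rule the_equality)
    show "\<exists>N. \<forall>n\<ge>N. prefix_comp A n x = swap_pairs A x"
      using prefix_comp_eventually[OF assms] by blast
    fix y assume "\<exists>N. \<forall>n\<ge>N. prefix_comp A n x = y"
    then obtain N where "\<forall>n\<ge>N. prefix_comp A n x = y" ..
    then show "y = swap_pairs A x"
      using prefix_comp_eventually[OF assms, of x "max N x"] by simp
  qed
qed

lemma Bij_UNIV_iff: "f \<in> Bij UNIV \<longleftrightarrow> bij f"
  by (simp add: Bij_def)

lemma comp_mem_generate_BijGroup:
  assumes "f \<in> H" "g \<in> H" "bij f" "bij g"
  shows "f \<circ> g \<in> generate (BijGroup UNIV) H"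
proof -
  have "f \<otimes>\<^bsub>BijGroup UNIV\<^esub> g = f \<circ> g"
    using assms(3,4) by (simp add: BijGroup_def Bij_UNIV_iff compose_def restrict_UNIV comp_def)
  with assms(1,2) show ?thesis
    by (metis generate.eng generate.incl)
qed

instance recf :: countable by countable_datatype

lemma infinite_ce_sets_in_range:
  "\<exists>E :: nat \<Rightarrow> nat set. (\<forall>n. infinite (E n)) \<and> (\<forall>B. ce B \<longrightarrow> infinite B \<longrightarrow> B \<in> range E)"
proof -
  define D where "D n = {x. \<exists>y. eval (from_nat n) [x] y}" for n
  define E where "E n = (if infinite (D n) then D n else UNIV)" for n
  have "B \<in> range E" if "ce B" "infinite B" for B
  proof -
    from \<open>ce B\<close> obtain f where "B = {x. \<exists>y. eval f [x] y}" by (auto simp: ce_def)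
    then have "B = D (to_nat f)" by (simp add: D_def)
    with \<open>infinite B\<close> show ?thesis by (metis E_def rangeI)
  qed
  moreover have "infinite (E n)" for n by (simp add: E_def)
  ultimately show ?thesis by blast
qed

lemma ex_strict_mono_choice:
  fixes E :: "nat \<Rightarrow> nat set"
  assumes "\<And>k. infinite (E k)"
  shows "\<exists>c. strict_mono c \<and> m \<le> c 0 \<and> (\<forall>k. c k \<in> E k)"
proof -
  define above where "above k y = (LEAST x. x \<in> E k \<and> y \<le> x)" for k y
  have above: "above k y \<in> E k \<and> y \<le> above k y" for k y
    unfolding above_def
    by (rule LeastI_ex) (meson assms infinite_nat_iff_unbounded_le)
  define c where "c = rec_nat (above 0 m) (\<lambda>k x. above (Suc k) (Suc x))"
  have c_0: "c 0 = above 0 m" and c_Suc: "c (Suc k) = above (Suc k) (Suc (c k))" for k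
    by (simp_all add: c_def)
  have "strict_mono c"
    using above by (simp add: strict_mono_Suc_iff c_Suc Suc_le_lessD)
  moreover have "c k \<in> E k" for k
    using above by (cases k) (simp_all add: c_0 c_Suc)
  ultimately show ?thesis using above c_0 by metis
qed

lemma bi_immuneI:
  assumes "infinite A" "infinite (- A)"
    and splits: "\<And>B. ce B \<Longrightarrow> infinite B \<Longrightarrow> B \<inter> A \<noteq> {} \<and> B - A \<noteq> {}"
  shows "bi_immune A"
proof -
  have "\<not> B \<subseteq> A" "\<not> B \<subseteq> - A" if "ce B" "infinite B" for B
    using splits[OF that] by blast+
  with assms(1,2) show ?thesis
    unfolding bi_immune_def immune_def by (auto simp: Compl_eq_Diff_UNIV)
qed

lemma ex_sparse_bi_immune_above:
  "\<exists>A. sparse A \<and> (\<forall>a\<in>A. m \<le> a) \<and> (\<forall>F \<subseteq> {..<m}. bi_immune (A \<union> F))"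
proof -
  obtain E :: "nat \<Rightarrow> nat set" where E_inf: "\<And>n. infinite (E n)"
    and E_ce: "\<And>B. ce B \<Longrightarrow> infinite B \<Longrightarrow> B \<in> range E"
    using infinite_ce_sets_in_range by blast
  obtain c where c: "strict_mono c" "m \<le> c 0" "\<And>k. c k \<in> E (k div 2)"
    using ex_strict_mono_choice[of "\<lambda>k. E (k div 2)" m] E_inf by blast
  have c_ge: "m \<le> c k" for k
    using c(1,2) strict_mono_less_eq[OF c(1), of 0 k] by simp
  define A where "A = range (\<lambda>n. c (2 * n))"
  have odd_notin: "c (Suc (2 * n)) \<notin> A" for n
    using strict_mono_eq[OF c(1)] by (auto simp: A_def) presburger
  have "sparse A"
    unfolding sparse_def A_def
  proof clarify
    fix j l assume eq: "Suc (c (2 * j)) = c (2 * l)"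
    then have "j < l" using strict_mono_less[OF c(1)] by (metis lessI mult_less_cancel1 zero_less_numeral)
    then have "c (Suc (2 * j)) < c (2 * l)" using strict_mono_less[OF c(1)] by simp
    moreover have "c (2 * j) < c (Suc (2 * j))" using strict_mono_less[OF c(1)] by simp
    ultimately show False using eq by simp
  qed
  moreover have "\<forall>a\<in>A. m \<le> a" using c_ge by (auto simp: A_def)
  moreover have "bi_immune (A \<union> F)" if "F \<subseteq> {..<m}" for F
  proof (rule bi_immuneI)
    have odd_out: "c (Suc (2 * n)) \<notin> A \<union> F" for n
      using odd_notin[of n] c_ge[of "Suc (2 * n)"] that by (auto simp: subset_eq)
    have "infinite A" "infinite (range (\<lambda>n. c (Suc (2 * n))))"
      unfolding A_def by (auto intro!: range_inj_infinite simp: inj_def strict_mono_eq[OF c(1)])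
    moreover have "range (\<lambda>n. c (Suc (2 * n))) \<subseteq> - (A \<union> F)"
      using odd_out by blast
    ultimately show "infinite (A \<union> F)" "infinite (- (A \<union> F))"
      using infinite_super by blast+
    fix B assume "ce B" "infinite B"
    then obtain n where "B = E n" using E_ce by blast
    then have "c (2 * n) \<in> B \<inter> (A \<union> F)" "c (Suc (2 * n)) \<in> B - (A \<union> F)"
      using c(3)[of "2 * n"] c(3)[of "Suc (2 * n)"] odd_out by (auto simp: A_def)
    then show "B \<inter> (A \<union> F) \<noteq> {} \<and> B - (A \<union> F) \<noteq> {}" by blast
  qed
  ultimately show ?thesis by blast
qed

theorem mainTheorem4:
  fixes i :: nat
  shows "adj_swap i \<in> G_B"
proof -
  obtain A where "sparse A" and above: "\<forall>a\<in>A. Suc (Suc i) \<le> a"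
    and bi: "\<forall>F \<subseteq> {..<Suc (Suc i)}. bi_immune (A \<union> F)"
    using ex_sparse_bi_immune_above by blast
  have bi_A: "bi_immune A" and bi_iA: "bi_immune (insert i A)"
    using bi[rule_format, of "{}"] bi[rule_format, of "{i}"] by auto
  have "infinite A" using bi_A by (simp add: bi_immune_def immune_def)
  have clear: "i \<notin> A" "Suc i \<notin> A" "i \<notin> Suc ` A" using above by force+
  then have "sparse (insert i A)" using \<open>sparse A\<close> above by (auto simp: sparse_def)
  have "sigma_set (insert i A) \<circ> sigma_set A = adj_swap i \<circ> (swap_pairs A \<circ> swap_pairs A)"
    using sigma_set_eq_swap_pairs \<open>infinite A\<close> \<open>sparse A\<close> \<open>sparse (insert i A)\<close>
      swap_pairs_insert(2)[OF clear] by (simp add: comp_assoc)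
  also have "\<dots> = adj_swap i"
    using swap_pairs_involution[OF \<open>sparse A\<close>] by (simp add: comp_def)
  finally have "adj_swap i = sigma_set (insert i A) \<circ> sigma_set A" ..
  moreover have "bij (sigma_set A)" "bij (sigma_set (insert i A))"
    using sigma_set_eq_swap_pairs swap_pairs_bij \<open>infinite A\<close> \<open>sparse A\<close> \<open>sparse (insert i A)\<close>
    by auto
  ultimately show ?thesis
    unfolding G_B_def using bi_A bi_iA by (auto intro!: comp_mem_generate_BijGroup)
qed

end
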